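(* Let $H=(V,E)$ be a hypergraph with $E\ne\emptyset$, without empty edges, such that $|e|$ is even for every $e\in E$, and let $H^T=(E,V^T)$ be its dual. Let $E'\subseteq E$. Then $(V,E')$ is a $2$-factor of $H$ if and only if $H^T$ has an Euler family whose anchor set is exactly $E'$ and which traverses every vertex $e\in E'$ of $H^T$ exactly $|e|/2$ times. Likewise, $(V,E')$ is a connected $2$-factor of $H$ if and only if $H^T$ has an Euler tour whose anchor set is exactly $E'$ and which traverses every $e\in E'$ exactly $|e|/2$ times.
   Context: A hypergraph $H=(V,E)$ consists of a finite nonempty vertex set $V$, a finite edge set $E$ disjoint from $V$, and an incidence function assigning to each edge $e\in E$ a subset of $V$ (also denoted $e$); distinct edges may have the same vertex set. The degree of a vertex is the number of edges containing it. A $2$-factor of $H$ is a hypersubgraph $(V,E')$ with $E'\subseteq E$ in which every vertex of $V$ has degree exactly $2$; it is connected if any two distinct vertices are joined by a walk in $(V,E')$. The dual of $H$ is the hypergraph $H^T=(E,V^T)$ with vertex set $E$ and edge set $V^T=\{v^T: v\in V\}$, where $v^T=\{e\in E: v\in e\}$. A walk is a sequence $W=v_0e_1v_1e_2\cdots e_kv_k$ of vertices $v_i$ and edges $e_i$ such that for each $i$, $v_{i-1}\ne v_i$ and $v_{i-1},v_i\in e_i$; the $v_i$ are its anchors. $W$ is closed if $k\ge 2$ and $v_0=v_k$; it is a strict trail if $e_1,\dots,e_k$ are pairwise distinct. For a closed walk, the number of times it traverses a vertex $x$ is the number of indices $i\in\{1,\dots,k\}$ with $v_i=x$ (so the common endpoint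 counts once). An Euler tour is a closed strict trail traversing every edge; an Euler family is a family of closed strict trails such that every edge lies in exactly one trail and no two trails have a common anchor. The anchor set of an Euler family (or tour) is the set of all anchors of its trails, and the number of times the family traverses a vertex is the sum over its trails. *)

theory Defs
  imports Main
begin

text \<open>A hypergraph is given by a vertex set V (of type 'v), an edge set E (of type 'e,
  so V and E are automatically disjoint) and an incidence function inc assigning to
  each edge a set of vertices. Distinct edges may have the same vertex set.\<close>

definition hypergraph :: "'v set \<Rightarrow> 'e set \<Rightarrow> ('e \<Rightarrow> 'v set) \<Rightarrow> bool" where
  "hypergraph V E inc \<longleftrightarrow> finite V \<and> V \<noteq> {} \<and> finite E \<and> (\<forall>e\<in>E. inc e \<subseteq> V)"

text \<open>Dual incidence: the edge v^T of the dual is the set of edges of H containing v.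
  The dual of (V,E,inc) is (E,V,dual_inc E inc).\<close>

definition dual_inc :: "'e set \<Rightarrow> ('e \<Rightarrow> 'v set) \<Rightarrow> 'v \<Rightarrow> 'e set" where
  "dual_inc E inc v = {e\<in>E. v \<in> inc e}"

definition degree :: "'e set \<Rightarrow> ('e \<Rightarrow> 'v set) \<Rightarrow> 'v \<Rightarrow> nat" where
  "degree E inc v = card {e\<in>E. v \<in> inc e}"

text \<open>A walk v0 e1 v1 ... ek vk is represented by the anchor list vs = [v0,...,vk]
  and the edge list es = [e1,...,ek].\<close>

definition walk :: "'v set \<Rightarrow> 'e set \<Rightarrow> ('e \<Rightarrow> 'v set) \<Rightarrow> 'v list \<Rightarrow> 'e list \<Rightarrow> bool" where
  "walk V E inc vs es \<longleftrightarrow> length vs = Suc (length es) \<and> set vs \<subseteq> V \<and> set es \<subseteq> E \<and>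
     (\<forall>i<length es. vs ! i \<noteq> vs ! Suc i \<and> vs ! i \<in> inc (es ! i) \<and> vs ! Suc i \<in> inc (es ! i))"

definition closed_walk :: "'v set \<Rightarrow> 'e set \<Rightarrow> ('e \<Rightarrow> 'v set) \<Rightarrow> 'v list \<Rightarrow> 'e list \<Rightarrow> bool" where
  "closed_walk V E inc vs es \<longleftrightarrow> walk V E inc vs es \<and> length es \<ge> 2 \<and> vs ! 0 = vs ! length es"

definition closed_strict_trail :: "'v set \<Rightarrow> 'e set \<Rightarrow> ('e \<Rightarrow> 'v set) \<Rightarrow> 'v list \<Rightarrow> 'e list \<Rightarrow> bool" where
  "closed_strict_trail V E inc vs es \<longleftrightarrow> closed_walk V E inc vs es \<and> distinct es"

definition traversals :: "'v list \<Rightarrow> 'e list \<Rightarrow> 'v \<Rightarrow> nat" where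
  "traversals vs es x = card {i\<in>{1..length es}. vs ! i = x}"

definition euler_tour :: "'v set \<Rightarrow> 'e set \<Rightarrow> ('e \<Rightarrow> 'v set) \<Rightarrow> 'v list \<Rightarrow> 'e list \<Rightarrow> bool" where
  "euler_tour V E inc vs es \<longleftrightarrow> closed_strict_trail V E inc vs es \<and> set es = E"

definition euler_family :: "'v set \<Rightarrow> 'e set \<Rightarrow> ('e \<Rightarrow> 'v set) \<Rightarrow> ('v list \<times> 'e list) set \<Rightarrow> bool" where
  "euler_family V E inc F \<longleftrightarrow>
     (\<forall>T\<in>F. closed_strict_trail V E inc (fst T) (snd T)) \<and>
     (\<forall>e\<in>E. \<exists>!T. T \<in> F \<and> e \<in> set (snd T)) \<and>
     (\<forall>T\<in>F. \<forall>T'\<in>F. T \<noteq> T' \<longrightarrow> set (fst T) \<inter> set (fst T') = {})"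

definition family_anchors :: "('v list \<times> 'e list) set \<Rightarrow> 'v set" where
  "family_anchors F = (\<Union>T\<in>F. set (fst T))"

definition family_traversals :: "('v list \<times> 'e list) set \<Rightarrow> 'v \<Rightarrow> nat" where
  "family_traversals F x = (\<Sum>T\<in>F. traversals (fst T) (snd T) x)"

definition two_factor :: "'v set \<Rightarrow> 'e set \<Rightarrow> ('e \<Rightarrow> 'v set) \<Rightarrow> 'e set \<Rightarrow> bool" where
  "two_factor V E inc E' \<longleftrightarrow> E' \<subseteq> E \<and> (\<forall>v\<in>V. degree E' inc v = 2)"

definition connected_hg :: "'v set \<Rightarrow> 'e set \<Rightarrow> ('e \<Rightarrow> 'v set) \<Rightarrow> bool" where
  "connected_hg V E inc \<longleftrightarrow> (\<forall>u\<in>V. \<forall>w\<in>V. u \<noteq> w \<longrightarrow>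
     (\<exists>vs es. walk V E inc vs es \<and> hd vs = u \<and> last vs = w))"

definition connected_two_factor :: "'v set \<Rightarrow> 'e set \<Rightarrow> ('e \<Rightarrow> 'v set) \<Rightarrow> 'e set \<Rightarrow> bool" where
  "connected_two_factor V E inc E' \<longleftrightarrow> two_factor V E inc E' \<and> connected_hg V E' inc"

end

theory Submission
  imports Defs
begin

text \<open>If (V,E') is a 2-factor, every v \<in> V lies in exactly two edges of E', so the dual edges
  v^T, restricted to E', form a multigraph on E' in which e has degree |e|. All degrees are even,
  so the edge set splits into closed trails: a longest trail is closed, contains every dual edge at
  its anchors, and the rest is handled by induction. A closed trail traversing e t times uses 2t
  dual edges at e, which gives the traversal counts. Conversely, if e is traversed |e|/2 times, its
  trail uses all |e| dual edges at e; hence the only edges of E' containing v are the two anchors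
  joined by v on its unique trail. Connectivity of (V,E') amounts to the family consisting of a
  single trail.\<close>

lemma set_tl_subset: "set (tl xs) \<subseteq> set xs"
  by (cases xs) auto

lemma card_Int_split:
  assumes "finite S" "A \<subseteq> S"
  shows "card (B \<inter> S) = card (B \<inter> A) + card (B \<inter> (S - A))"
proof -
  have "B \<inter> S \<inter> A = B \<inter> A" "B \<inter> S - A = B \<inter> (S - A)" using assms(2) by auto
  then show ?thesis using card_Int_Diff[of "B \<inter> S" A] assms(1) by simp
qed

lemma card_less_Suc: "card {j. j < Suc k \<and> P j} = card {j. j < k \<and> P j} + of_bool (P k)"
proof (cases "P k")
  case True
  then have "{j. j < Suc k \<and> P j} = insert k {j. j < k \<and> P j}" by (auto simp: less_Suc_eq)
  then show ?thesis using True by simp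
next
  case False
  then have "{j. j < Suc k \<and> P j} = {j. j < k \<and> P j}" by (auto simp: less_Suc_eq)
  then show ?thesis using False by simp
qed

text \<open>Both sides count the j \<le> k with P j.\<close>

lemma card_less_shift:
  "card {j. j < k \<and> P j} + of_bool (P k) = card {j. j < k \<and> P (Suc j)} + of_bool (P 0)"
proof (induction k)
  case (Suc k)
  then show ?case
    using card_less_Suc[of k P] card_less_Suc[of k "\<lambda>j. P (Suc j)"] by linarith
qed simp

section \<open>Walks\<close>

lemma walk_length: "walk V E inc vs es \<Longrightarrow> length vs = Suc (length es)"
  by (simp add: walk_def)

lemma walk_nthD:
  assumes "walk V E inc vs es" "i < length es"
  shows "vs ! i \<noteq> vs ! Suc i" "vs ! i \<in> inc (es ! i)" "vs ! Suc i \<in> inc (es ! i)" "es ! i \<in> E"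
    "vs ! i \<in> V" "vs ! Suc i \<in> V"
  using assms unfolding walk_def by (auto intro!: nth_mem subsetD[of "set vs" V] subsetD[of "set es" E])

lemma walk_last_conv_nth: "walk V E inc vs es \<Longrightarrow> last vs = vs ! length es"
  by (metis walk_length last_conv_nth diff_Suc_1 length_0_conv nat.distinct(1))

lemma walk_hd_conv_nth: "walk V E inc vs es \<Longrightarrow> hd vs = vs ! 0"
  by (metis walk_length hd_conv_nth length_0_conv nat.distinct(1))

lemma closed_strict_trailI:
  assumes w: "walk V E inc vs es" and "distinct es" "es \<noteq> []" and closed: "vs ! 0 = vs ! length es"
  shows "closed_strict_trail V E inc vs es"
proof -
  have "length es \<noteq> 1"
  proof
    assume "length es = 1"
    then show False using walk_nthD(1)[OF w, of 0] closed by simp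
  qed
  then have "2 \<le> length es" using assms(3) by (cases "length es") auto
  then show ?thesis
    using assms unfolding closed_strict_trail_def closed_walk_def by simp
qed

lemma closed_strict_trail_mono:
  "closed_strict_trail V E inc vs es \<Longrightarrow> E \<subseteq> E2 \<Longrightarrow> closed_strict_trail V E2 inc vs es"
  unfolding closed_strict_trail_def closed_walk_def walk_def by blast

lemma walk_take:
  assumes "walk V E inc vs es" "i \<le> length es"
  shows "walk V E inc (take (Suc i) vs) (take i es)"
  using assms unfolding walk_def by (auto dest: in_set_takeD simp: min_def)

lemma walk_drop:
  assumes "walk V E inc vs es" "i \<le> length es"
  shows "walk V E inc (drop i vs) (drop i es)"
  using assms unfolding walk_def by (auto dest: in_set_dropD)

lemma walk_append:
  assumes w1: "walk V E inc vs1 es1" and w2: "walk V E inc vs2 es2" and joint: "last vs1 = hd vs2"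
  shows "walk V E inc (vs1 @ tl vs2) (es1 @ es2)"
proof -
  let ?n = "length es1" and ?vs = "vs1 @ tl vs2"
  have l1: "length vs1 = Suc ?n" and l2: "length vs2 = Suc (length es2)"
    using w1 w2 by (simp_all add: walk_length)
  have left: "?vs ! i = vs1 ! i" if "i \<le> ?n" for i
    using that l1 by (simp add: nth_append)
  have right: "?vs ! (?n + m) = vs2 ! m" if "m < length vs2" for m
  proof (cases m)
    case 0
    then show ?thesis
      using joint walk_last_conv_nth[OF w1] walk_hd_conv_nth[OF w2] left[of ?n] by simp
  next
    case (Suc m')
    then show ?thesis using l1 that by (simp add: nth_append nth_tl)
  qed
  have step: "?vs ! i \<noteq> ?vs ! Suc i \<and> ?vs ! i \<in> inc ((es1 @ es2) ! i) \<and> ?vs ! Suc i \<in> inc ((es1 @ es2) ! i)"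
    if i: "i < length (es1 @ es2)" for i
  proof (cases "i < ?n")
    case True
    then show ?thesis using left[of i] left[of "Suc i"] walk_nthD[OF w1 True] by (simp add: nth_append)
  next
    case False
    then obtain m where m: "i = ?n + m" "m < length es2"
      using i by (metis add_diff_inverse_nat length_append nat_add_left_cancel_less)
    then show ?thesis
      using right[of m] right[of "Suc m"] l2 walk_nthD[OF w2 m(2)] by (simp add: nth_append)
  qed
  have "set ?vs \<subseteq> V" "set (es1 @ es2) \<subseteq> E"
    using w1 w2 set_tl_subset[of vs2] unfolding walk_def by auto
  then show ?thesis
    unfolding walk_def using l1 l2 step by simp
qed

lemma walk_rev:
  assumes w: "walk V E inc vs es"
  shows "walk V E inc (rev vs) (rev es)"
proof -
  let ?k = "length es"
  have l: "length vs = Suc ?k" using w by (rule walk_length)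
  have "rev vs ! j \<noteq> rev vs ! Suc j \<and> rev vs ! j \<in> inc (rev es ! j) \<and> rev vs ! Suc j \<in> inc (rev es ! j)"
    if j: "j < ?k" for j
  proof -
    define i where "i = ?k - Suc j"
    have "i < ?k" "rev vs ! j = vs ! Suc i" "rev vs ! Suc j = vs ! i" "rev es ! j = es ! i"
      using j l by (simp_all add: i_def rev_nth Suc_diff_Suc)
    then show ?thesis using walk_nthD[OF w] by metis
  qed
  then show ?thesis using w l unfolding walk_def by auto
qed

lemma walk_rotate:
  assumes w: "walk V E inc vs es" and closed: "vs ! 0 = vs ! length es" and i: "i < length es"
  shows "walk V E inc (drop i vs @ tl (take (Suc i) vs)) (drop i es @ take i es)"
proof (rule walk_append)
  show "walk V E inc (drop i vs) (drop i es)" "walk V E inc (take (Suc i) vs) (take i es)"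
    using walk_drop[OF w] walk_take[OF w] i by simp_all
  have "last (drop i vs) = last vs" using i walk_length[OF w] by simp
  then show "last (drop i vs) = hd (take (Suc i) vs)"
    using closed walk_last_conv_nth[OF w] walk_hd_conv_nth[OF w] i by simp
qed

lemma walk_connects_anchors:
  assumes w: "walk V E inc vs es" and i: "i \<le> length es" and j: "j \<le> length es"
  shows "\<exists>vs' es'. walk V E inc vs' es' \<and> hd vs' = vs ! i \<and> last vs' = vs ! j"
proof -
  have ordered: "\<exists>vs' es'. walk V E inc vs' es' \<and> hd vs' = vs ! i \<and> last vs' = vs ! j"
    if "i \<le> j" "j \<le> length es" for i j
  proof (intro exI conjI)
    let ?vs' = "drop i (take (Suc j) vs)"
    show "walk V E inc ?vs' (drop i (take j es))"
      using walk_drop[OF walk_take[OF w that(2)], of i] that by simp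
    show "hd ?vs' = vs ! i" "last ?vs' = vs ! j"
      using that walk_length[OF w] by (simp_all add: hd_drop_conv_nth last_conv_nth)
  qed
  show ?thesis
  proof (cases "i \<le> j")
    case True
    then show ?thesis using ordered j by blast
  next
    case False
    then obtain vs' es' where "walk V E inc vs' es'" "hd vs' = vs ! j" "last vs' = vs ! i"
      using ordered[of j i] i by auto
    then have "walk V E inc (rev vs') (rev es')" "hd (rev vs') = vs ! i" "last (rev vs') = vs ! j"
      using walk_rev by (simp_all add: hd_rev last_rev)
    then show ?thesis by blast
  qed
qed

definition walk_edges_at :: "'v list \<Rightarrow> 'e list \<Rightarrow> 'v \<Rightarrow> 'e set" where
  "walk_edges_at vs es x = (\<lambda>j. es ! j) ` {j. j < length es \<and> (vs ! j = x \<or> vs ! Suc j = x)}"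

lemma walk_edges_at_subset_set: "walk_edges_at vs es x \<subseteq> set es"
  by (auto simp: walk_edges_at_def)

lemma traversals_conv_card_steps: "traversals vs es x = card {j. j < length es \<and> vs ! Suc j = x}"
proof -
  have "{i\<in>{1..length es}. vs ! i = x} = Suc ` {j. j < length es \<and> vs ! Suc j = x}"
    by (auto simp: image_iff) (metis Suc_le_eq Suc_pred')
  then show ?thesis unfolding traversals_def by (simp add: card_image)
qed

lemma traversals_eq_0:
  assumes "walk V E inc vs es" "x \<notin> set vs"
  shows "traversals vs es x = 0"
  using assms walk_length[OF assms(1)] unfolding traversals_def by (auto intro: nth_mem)

text \<open>Each traversal of x uses two edges at x, except that the start leaves x once and the end
  enters it once; distinctness makes the edges at different steps different.\<close>

lemma card_walk_edges_at:
  assumes w: "walk V E inc vs es" and d: "distinct es"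
  shows "card (walk_edges_at vs es x) + of_bool (vs ! length es = x)
       = 2 * traversals vs es x + of_bool (vs ! 0 = x)"
proof -
  let ?k = "length es"
  let ?leave = "{j. j < ?k \<and> vs ! j = x}" and ?enter = "{j. j < ?k \<and> vs ! Suc j = x}"
  have "card (walk_edges_at vs es x) = card {j. j < ?k \<and> (vs ! j = x \<or> vs ! Suc j = x)}"
    unfolding walk_edges_at_def by (rule card_image) (rule inj_on_nth[OF d], auto)
  also have "\<dots> = card (?leave \<union> ?enter)"
    by (rule arg_cong[where f = card]) auto
  also have "\<dots> = card ?leave + card ?enter"
    by (rule card_Un_disjoint) (use walk_nthD(1)[OF w] in fastforce)+
  finally show ?thesis
    using card_less_shift[of ?k "\<lambda>i. vs ! i = x"] traversals_conv_card_steps[of vs es x] by linarith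
qed

lemma card_walk_edges_at_closed:
  assumes "walk V E inc vs es" "distinct es" "vs ! 0 = vs ! length es"
  shows "card (walk_edges_at vs es x) = 2 * traversals vs es x"
  using card_walk_edges_at[OF assms(1,2), of x] assms(3) by simp

lemma euler_family_trailD:
  assumes "euler_family V E inc F" "T \<in> F"
  shows "walk V E inc (fst T) (snd T)" "distinct (snd T)" "2 \<le> length (snd T)"
    "fst T ! 0 = fst T ! length (snd T)"
  using assms unfolding euler_family_def closed_strict_trail_def closed_walk_def by auto

lemma euler_family_trail_exists:
  assumes "euler_family V E inc F" "e \<in> E"
  obtains T where "T \<in> F" "e \<in> set (snd T)"
proof -
  have "\<forall>e\<in>E. \<exists>!T. T \<in> F \<and> e \<in> set (snd T)" using assms(1) by (simp add: euler_family_def)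
  from bspec[OF this assms(2)] have "\<exists>T. T \<in> F \<and> e \<in> set (snd T)" by (rule ex1_implies_ex)
  then show ?thesis using that by blast
qed

lemma euler_family_trail_unique:
  assumes "euler_family V E inc F" "e \<in> E" "T \<in> F" "T' \<in> F" "e \<in> set (snd T)" "e \<in> set (snd T')"
  shows "T = T'"
  using assms unfolding euler_family_def by blast

lemma euler_family_finite:
  assumes ef: "euler_family V E inc F" and fin: "finite E"
  shows "finite F"
proof -
  let ?first_edge = "\<lambda>T. snd T ! 0"
  have first_edge: "?first_edge T \<in> set (snd T)" "?first_edge T \<in> E" if "T \<in> F" for T
    using euler_family_trailD(1,3)[OF ef that] unfolding walk_def by (auto intro!: nth_mem subsetD[of "set (snd T)" E])
  have "inj_on ?first_edge F"
    by (rule inj_onI) (metis first_edge euler_family_trail_unique[OF ef])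
  moreover have "finite (?first_edge ` F)"
    using first_edge fin by (blast intro: finite_subset)
  ultimately show ?thesis by (rule finite_imageD[rotated])
qed

lemma family_traversals_eq_traversals:
  assumes ef: "euler_family V E inc F" and fin: "finite F" and T: "T \<in> F" and x: "x \<in> set (fst T)"
  shows "family_traversals F x = traversals (fst T) (snd T) x"
proof -
  have "traversals (fst T') (snd T') x = 0" if "T' \<in> F - {T}" for T'
  proof (rule traversals_eq_0)
    show "walk V E inc (fst T') (snd T')" using that by (blast intro: euler_family_trailD(1)[OF ef])
    show "x \<notin> set (fst T')" using that ef T x unfolding euler_family_def by blast
  qed
  then show ?thesis
    unfolding family_traversals_def using fin T by (simp add: sum.remove)
qed

lemma euler_family_insert:
  assumes F: "euler_family V (E - set es) inc F" and trail: "closed_strict_trail V E inc vs es"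
    and disjoint: "\<forall>T\<in>F. set vs \<inter> set (fst T) = {}"
  shows "euler_family V E inc (insert (vs, es) F)"
proof -
  have F_edges: "set (snd T) \<subseteq> E - set es" if "T \<in> F" for T
    using euler_family_trailD(1)[OF F that] by (simp add: walk_def)
  have F_disjoint: "\<forall>T\<in>F. \<forall>T'\<in>F. T \<noteq> T' \<longrightarrow> set (fst T) \<inter> set (fst T') = {}"
    using F by (simp add: euler_family_def)
  show ?thesis
    unfolding euler_family_def
  proof (intro conjI ballI impI)
    fix T assume "T \<in> insert (vs, es) F"
    then show "closed_strict_trail V E inc (fst T) (snd T)"
      using trail F closed_strict_trail_mono[of V "E - set es" inc "fst T" "snd T" E]
      unfolding euler_family_def by auto
  next
    fix e assume e: "e \<in> E"
    show "\<exists>!T. T \<in> insert (vs, es) F \<and> e \<in> set (snd T)"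
    proof (cases "e \<in> set es")
      case True
      then show ?thesis using F_edges by (intro ex1I[of _ "(vs, es)"]) auto
    next
      case False
      then show ?thesis using F e unfolding euler_family_def by auto
    qed
  next
    fix T T' assume "T \<in> insert (vs, es) F" "T' \<in> insert (vs, es) F" "T \<noteq> T'"
    then consider "T = (vs, es)" "T' \<in> F" | "T' = (vs, es)" "T \<in> F" | "T \<in> F" "T' \<in> F"
      by auto
    then show "set (fst T) \<inter> set (fst T') = {}"
      using disjoint F_disjoint \<open>T \<noteq> T'\<close> by cases (simp_all add: Int_commute)
  qed
qed

section \<open>Euler families of the dual with the prescribed traversals\<close>

lemma dual_walk_nthD:
  assumes "walk E V (dual_inc E inc) vs es" "j < length es"
  shows "es ! j \<in> inc (vs ! j)" "es ! j \<in> inc (vs ! Suc j)" "vs ! j \<noteq> vs ! Suc j" "es ! j \<in> V"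
    "vs ! j \<in> E" "vs ! Suc j \<in> E"
  using walk_nthD[OF assms] by (auto simp: dual_inc_def)

lemma dual_walk_single_iff:
  "walk E V (dual_inc E inc) [a, b] [v] \<longleftrightarrow> a \<in> E \<and> b \<in> E \<and> v \<in> V \<and> a \<noteq> b \<and> v \<in> inc a \<and> v \<in> inc b"
  by (auto simp: walk_def dual_inc_def)

lemma dual_walk_edges_at_subset: "walk E V (dual_inc E inc) vs es \<Longrightarrow> walk_edges_at vs es e \<subseteq> inc e"
  unfolding walk_edges_at_def using dual_walk_nthD(1,2) by blast

text \<open>The trail uses 2 (|e| div 2) = |e| dual edges at e, and there are only |e| of them.\<close>

lemma dual_euler_family_edges_at:
  assumes hg: "hypergraph V E inc" and even: "\<forall>e\<in>E. even (card (inc e))" and E': "E' \<subseteq> E"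
    and ef: "euler_family E V (dual_inc E inc) F" and anchors: "family_anchors F = E'"
    and trav: "\<forall>e\<in>E'. family_traversals F e = card (inc e) div 2"
    and T: "T \<in> F" and e: "e \<in> set (fst T)"
  shows "walk_edges_at (fst T) (snd T) e = inc e"
proof -
  have eE': "e \<in> E'" using anchors T e unfolding family_anchors_def by auto
  have fin_e: "finite (inc e)" using hg eE' E' unfolding hypergraph_def by (meson finite_subset subsetD)
  have finF: "finite F" using hg euler_family_finite[OF ef] unfolding hypergraph_def by simp
  note w = euler_family_trailD(1)[OF ef T]
  have "card (walk_edges_at (fst T) (snd T) e) = 2 * traversals (fst T) (snd T) e"
    using card_walk_edges_at_closed[OF euler_family_trailD(1,2,4)[OF ef T]] .
  also have "\<dots> = card (inc e)"
    using family_traversals_eq_traversals[OF ef finF T e] trav even eE' E'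
    by (metis even_two_times_div_two subsetD)
  finally show ?thesis
    using card_subset_eq[OF fin_e dual_walk_edges_at_subset[OF w]] by simp
qed

lemma euler_family_imp_two_factor:
  assumes hg: "hypergraph V E inc" and even: "\<forall>e\<in>E. even (card (inc e))" and E': "E' \<subseteq> E"
    and ef: "euler_family E V (dual_inc E inc) F" and anchors: "family_anchors F = E'"
    and trav: "\<forall>e\<in>E'. family_traversals F e = card (inc e) div 2"
  shows "two_factor V E inc E'"
  unfolding two_factor_def degree_def
proof (intro conjI ballI)
  fix v assume v: "v \<in> V"
  then obtain T where T: "T \<in> F" "v \<in> set (snd T)" by (rule euler_family_trail_exists[OF ef])
  then obtain j where j: "j < length (snd T)" "snd T ! j = v" by (auto simp: in_set_conv_nth)
  note w = euler_family_trailD(1)[OF ef T(1)]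
  let ?a = "fst T ! j" and ?b = "fst T ! Suc j"
  have "{?a, ?b} \<subseteq> {e\<in>E'. v \<in> inc e}"
    using anchors T(1) j walk_length[OF w] dual_walk_nthD(1,2)[OF w j(1)]
    unfolding family_anchors_def by (auto intro!: nth_mem)
  moreover have "{e\<in>E'. v \<in> inc e} \<subseteq> {?a, ?b}"
  proof
    fix e assume "e \<in> {e\<in>E'. v \<in> inc e}"
    then obtain T' where T': "T' \<in> F" "e \<in> set (fst T')" "v \<in> inc e"
      using anchors unfolding family_anchors_def by auto
    then have "v \<in> walk_edges_at (fst T') (snd T') e"
      using dual_euler_family_edges_at[OF hg even E' ef anchors trav] by blast
    then obtain j' where j': "j' < length (snd T')" "snd T' ! j' = v"
      "fst T' ! j' = e \<or> fst T' ! Suc j' = e"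
      unfolding walk_edges_at_def by auto
    have "T' = T"
      using euler_family_trail_unique[OF ef v T'(1) T(1)] j' T(2) by (auto intro: nth_mem)
    then have "j' = j"
      using j j' euler_family_trailD(2)[OF ef T(1)] nth_eq_iff_index_eq by metis
    then show "e \<in> {?a, ?b}" using j' \<open>T' = T\<close> by auto
  qed
  ultimately have "{e\<in>E'. v \<in> inc e} = {?a, ?b}" by blast
  then show "card {e\<in>E'. v \<in> inc e} = 2"
    using dual_walk_nthD(3)[OF w j(1)] by simp
qed (rule E')

section \<open>Euler families from 2-factors\<close>

locale hypergraph_two_factor =
  fixes V :: "'v set" and E :: "'e set" and inc :: "'e \<Rightarrow> 'v set" and E' :: "'e set"
  assumes hypergraph: "hypergraph V E inc" and two_factor: "two_factor V E inc E'"
begin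

lemma finite_vertices: "finite V"
  using hypergraph by (simp add: hypergraph_def)

lemma factor_edges_subset: "E' \<subseteq> E"
  using two_factor by (simp add: two_factor_def)

lemma factor_edge_subset_vertices: "e \<in> E' \<Longrightarrow> inc e \<subseteq> V"
  using hypergraph factor_edges_subset by (auto simp: hypergraph_def)

lemma card_factor_edges_at: "v \<in> V \<Longrightarrow> card {e\<in>E'. v \<in> inc e} = 2"
  using two_factor by (simp add: two_factor_def degree_def)

lemma obtain_factor_edges_at:
  assumes "v \<in> V"
  obtains a b where "a \<noteq> b" "{e\<in>E'. v \<in> inc e} = {a, b}"
  using card_factor_edges_at[OF assms] by (meson card_2_iff)

lemma factor_edges_at_eq:
  assumes "v \<in> V" "a \<in> E'" "b \<in> E'" "a \<noteq> b" "v \<in> inc a" "v \<in> inc b"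
  shows "{e\<in>E'. v \<in> inc e} = {a, b}"
proof (rule sym, rule card_subset_eq)
  show "finite {e\<in>E'. v \<in> inc e}" "card {a, b} = card {e\<in>E'. v \<in> inc e}"
    using card_factor_edges_at[OF assms(1)] assms(4) by (auto intro: card_ge_0_finite)
qed (use assms in auto)

lemma other_factor_edge:
  assumes "v \<in> V" "e \<in> E'" "v \<in> inc e"
  obtains u where "u \<in> E'" "u \<noteq> e" "v \<in> inc u"
proof -
  obtain a b where ab: "a \<noteq> b" "{e\<in>E'. v \<in> inc e} = {a, b}"
    using obtain_factor_edges_at[OF assms(1)] .
  then have "a \<in> E'" "v \<in> inc a" "b \<in> E'" "v \<in> inc b" "e = a \<or> e = b"
    using assms(2,3) by blast+
  then show ?thesis using that ab(1) by metis
qed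

text \<open>Since every v \<in> V lies in exactly two factor edges, these are the trails of the multigraph
  on E' whose edges are the v \<in> S.\<close>

definition factor_trail :: "'v set \<Rightarrow> 'e list \<Rightarrow> 'v list \<Rightarrow> bool" where
  "factor_trail S vs es \<longleftrightarrow>
     walk E V (dual_inc E inc) vs es \<and> distinct es \<and> set es \<subseteq> S \<and> set vs \<subseteq> E'"

lemma factor_trail_anchor_cases:
  assumes t: "factor_trail S vs es" and j: "j < length es" and e: "e \<in> E'" "es ! j \<in> inc e"
  shows "e = vs ! j \<or> e = vs ! Suc j"
proof -
  have w: "walk E V (dual_inc E inc) vs es" using t by (simp add: factor_trail_def)
  have "vs ! j \<in> E'" "vs ! Suc j \<in> E'"
    using t j walk_length[OF w] unfolding factor_trail_def by (auto intro!: nth_mem)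
  then show ?thesis
    using factor_edges_at_eq[of "es ! j" "vs ! j" "vs ! Suc j"] dual_walk_nthD[OF w j] e by blast
qed

lemma factor_trail_edges_at:
  assumes t: "factor_trail S vs es" and e: "e \<in> E'"
  shows "walk_edges_at vs es e = inc e \<inter> set es"
proof
  have w: "walk E V (dual_inc E inc) vs es" using t by (simp add: factor_trail_def)
  show "walk_edges_at vs es e \<subseteq> inc e \<inter> set es"
    by (simp add: dual_walk_edges_at_subset[OF w] walk_edges_at_subset_set)
  show "inc e \<inter> set es \<subseteq> walk_edges_at vs es e"
  proof
    fix v assume "v \<in> inc e \<inter> set es"
    then obtain j where "j < length es" "es ! j = v" "es ! j \<in> inc e" by (auto simp: in_set_conv_nth)
    then show "v \<in> walk_edges_at vs es e"
      using factor_trail_anchor_cases[OF t _ e] unfolding walk_edges_at_def by (auto intro!: image_eqI)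
  qed
qed

lemma closed_factor_trail_card:
  assumes t: "factor_trail S vs es" and closed: "vs ! 0 = vs ! length es" and e: "e \<in> E'"
  shows "card (inc e \<inter> set es) = 2 * traversals vs es e"
  using t card_walk_edges_at_closed[of E V "dual_inc E inc" vs es e] closed
    factor_trail_edges_at[OF t e] unfolding factor_trail_def by simp

lemma factor_trail_anchors:
  assumes t: "factor_trail S vs es" and k: "1 \<le> length es"
  shows "set vs = {e\<in>E'. inc e \<inter> set es \<noteq> {}}"
proof
  have w: "walk E V (dual_inc E inc) vs es" using t by (simp add: factor_trail_def)
  show "set vs \<subseteq> {e\<in>E'. inc e \<inter> set es \<noteq> {}}"
  proof
    fix e assume e: "e \<in> set vs"
    then obtain j where j: "j \<le> length es" "vs ! j = e"
      using walk_length[OF w] by (auto simp: in_set_conv_nth less_Suc_eq_le)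
    have "\<exists>i<length es. es ! i \<in> inc e"
    proof (cases "j < length es")
      case True
      then show ?thesis using dual_walk_nthD(1)[OF w True] j by blast
    next
      case False
      then have "Suc (length es - 1) = j" "length es - 1 < length es" using j k by auto
      then show ?thesis using dual_walk_nthD(2)[OF w, of "length es - 1"] j by metis
    qed
    then show "e \<in> {e\<in>E'. inc e \<inter> set es \<noteq> {}}"
      using e t unfolding factor_trail_def by (auto intro: nth_mem)
  qed
  show "{e\<in>E'. inc e \<inter> set es \<noteq> {}} \<subseteq> set vs"
  proof
    fix e assume "e \<in> {e\<in>E'. inc e \<inter> set es \<noteq> {}}"
    then obtain j where j: "j < length es" "es ! j \<in> inc e" "e \<in> E'" by (auto simp: in_set_conv_nth)
    then show "e \<in> set vs"
      using factor_trail_anchor_cases[OF t j(1) j(3,2)] walk_length[OF w] by (auto intro: nth_mem)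
  qed
qed

lemma factor_trail_length_le:
  assumes "factor_trail S vs es" "S \<subseteq> V"
  shows "length es \<le> card S"
  using assms finite_vertices unfolding factor_trail_def
  by (metis card_mono distinct_card finite_subset)

lemma longest_factor_trail_exists:
  assumes S: "S \<subseteq> V" "S \<noteq> {}"
  obtains vs es where "factor_trail S vs es" "1 \<le> length es"
    "\<forall>vs' es'. factor_trail S vs' es' \<longrightarrow> length es' \<le> length es"
proof -
  obtain v where v: "v \<in> S" using S by auto
  then have "v \<in> V" using S by auto
  then obtain a b where ab: "a \<noteq> b" "{e\<in>E'. v \<in> inc e} = {a, b}"
    by (rule obtain_factor_edges_at)
  then have "a \<in> E'" "b \<in> E'" "v \<in> inc a" "v \<in> inc b" by blast+
  then have "factor_trail S [a, b] [v]"
    unfolding factor_trail_def dual_walk_single_iff using ab v S factor_edges_subset by auto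
  moreover have "\<forall>T. factor_trail S (fst T) (snd T) \<longrightarrow> length (snd T) < Suc (card S)"
    using factor_trail_length_le S by (simp add: less_Suc_eq_le)
  ultimately have "\<exists>T. factor_trail S (fst T) (snd T) \<and>
      (\<forall>T'. factor_trail S (fst T') (snd T') \<longrightarrow> length (snd T') \<le> length (snd T))"
    by (intro ex_has_greatest_nat[of _ "([a, b], [v])"]) simp_all
  then obtain T where T: "factor_trail S (fst T) (snd T)"
    and longest: "\<forall>T'. factor_trail S (fst T') (snd T') \<longrightarrow> length (snd T') \<le> length (snd T)"
    by blast
  have "1 \<le> length (snd T)"
    using longest[rule_format, of "([a, b], [v])"] \<open>factor_trail S [a, b] [v]\<close> by simp
  moreover have "\<forall>vs' es'. factor_trail S vs' es' \<longrightarrow> length es' \<le> length (snd T)"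
    using longest by (metis fst_conv snd_conv)
  ultimately show ?thesis using that T by blast
qed

text \<open>If the last anchor w differed from the first, the trail would use an odd number of the
  evenly many dual edges at w in S, so it could be extended by one of the others.\<close>

lemma longest_factor_trail_closed:
  assumes S: "S \<subseteq> V" and even: "\<forall>e\<in>E'. even (card (inc e \<inter> S))"
    and t: "factor_trail S vs es"
    and longest: "\<forall>vs' es'. factor_trail S vs' es' \<longrightarrow> length es' \<le> length es"
  shows "vs ! 0 = vs ! length es"
proof (rule ccontr)
  assume open_trail: "vs ! 0 \<noteq> vs ! length es"
  let ?w = "vs ! length es"
  have w: "walk E V (dual_inc E inc) vs es" and d: "distinct es" and sS: "set es \<subseteq> S"
    and sE': "set vs \<subseteq> E'" using t by (simp_all add: factor_trail_def)
  have wE': "?w \<in> E'" using sE' walk_length[OF w] by (auto intro!: nth_mem)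
  have "card (inc ?w \<inter> set es) + 1 = 2 * traversals vs es ?w"
    using card_walk_edges_at[OF w d, of ?w] open_trail factor_trail_edges_at[OF t wE'] by simp
  then have "odd (card (inc ?w \<inter> set es))" by presburger
  then have "inc ?w \<inter> set es \<noteq> inc ?w \<inter> S" using even wE' by auto
  then obtain v where v: "v \<in> inc ?w" "v \<in> S" "v \<notin> set es" using sS by blast
  have "v \<in> V" using v S by blast
  then obtain u where u: "u \<in> E'" "u \<noteq> ?w" "v \<in> inc u"
    by (rule other_factor_edge[OF _ wE' v(1)])
  have "walk E V (dual_inc E inc) [?w, u] [v]"
    unfolding dual_walk_single_iff using u v S wE' factor_edges_subset by auto
  from walk_append[OF w this] have "walk E V (dual_inc E inc) (vs @ [u]) (es @ [v])"
    using walk_last_conv_nth[OF w] by simp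
  then have extended: "factor_trail S (vs @ [u]) (es @ [v])"
    using t v u unfolding factor_trail_def by auto
  show False using longest[rule_format, OF extended] by simp
qed

text \<open>If an unused v \<in> S lay in an anchor a, rotating the trail to start at a and prepending the
  step along v from the other factor edge containing v would give a longer trail.\<close>

lemma longest_closed_factor_trail_saturated:
  assumes S: "S \<subseteq> V" and t: "factor_trail S vs es" and k: "1 \<le> length es"
    and longest: "\<forall>vs' es'. factor_trail S vs' es' \<longrightarrow> length es' \<le> length es"
    and closed: "vs ! 0 = vs ! length es"
    and a: "a \<in> set vs" and v: "v \<in> S" "v \<in> inc a"
  shows "v \<in> set es"
proof (rule ccontr)
  assume v_new: "v \<notin> set es"
  have w: "walk E V (dual_inc E inc) vs es" and d: "distinct es" and sS: "set es \<subseteq> S"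
    and sE': "set vs \<subseteq> E'" using t by (simp_all add: factor_trail_def)
  obtain i where i: "i < length es" "vs ! i = a"
  proof -
    obtain j where "j \<le> length es" "vs ! j = a"
      using a walk_length[OF w] by (auto simp: in_set_conv_nth less_Suc_eq_le)
    then show ?thesis using that[of j] that[of 0] closed k by (cases "j < length es") (auto simp: Suc_le_eq)
  qed
  define vs' where "vs' = drop i vs @ tl (take (Suc i) vs)"
  define es' where "es' = drop i es @ take i es"
  have w': "walk E V (dual_inc E inc) vs' es'"
    unfolding vs'_def es'_def by (rule walk_rotate[OF w closed i(1)])
  have "hd vs' = a" unfolding vs'_def using i walk_length[OF w] by (simp add: hd_drop_conv_nth)
  have "es' = rotate i es" unfolding es'_def using i by (simp add: rotate_drop_take)
  then have "set es' = set es" "distinct es'" using d by simp_all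
  moreover have "set vs' \<subseteq> set vs"
    unfolding vs'_def using set_tl_subset[of "take (Suc i) vs"] by (auto dest: in_set_dropD in_set_takeD)
  moreover have "v \<in> V" "a \<in> E'" using v S sE' a by blast+
  moreover obtain u where u: "u \<in> E'" "u \<noteq> a" "v \<in> inc u"
    by (rule other_factor_edge[OF calculation(4,5) v(2)])
  moreover have "walk E V (dual_inc E inc) ([u, a] @ tl vs') ([v] @ es')"
  proof (rule walk_append[OF _ w'])
    show "walk E V (dual_inc E inc) [u, a] [v]"
      unfolding dual_walk_single_iff using u v S sE' a factor_edges_subset by auto
  qed (simp add: \<open>hd vs' = a\<close>)
  ultimately have "factor_trail S ([u, a] @ tl vs') ([v] @ es')"
    using v v_new sS sE' a set_tl_subset[of vs'] unfolding factor_trail_def by auto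
  moreover have "length ([v] @ es') = Suc (length es)" unfolding es'_def using i by simp
  ultimately show False using longest[rule_format, of "[u, a] @ tl vs'" "[v] @ es'"] by simp
qed

text \<open>The induction runs over the sub-hypergraphs (E, S) of the dual, with the traversal counts
  taken relative to S.\<close>

definition factor_family :: "'v set \<Rightarrow> ('e list \<times> 'v list) set \<Rightarrow> bool" where
  "factor_family S F \<longleftrightarrow> euler_family E S (dual_inc E inc) F \<and>
     family_anchors F = {e\<in>E'. inc e \<inter> S \<noteq> {}} \<and>
     (\<forall>e\<in>E'. family_traversals F e = card (inc e \<inter> S) div 2)"

lemma factor_family_empty: "factor_family {} {}"
  by (simp add: factor_family_def euler_family_def family_anchors_def family_traversals_def)

lemma factor_family_insert:
  assumes S: "S \<subseteq> V" and F': "factor_family (S - set es) F'"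
    and t: "factor_trail S vs es" and k: "1 \<le> length es" and closed: "vs ! 0 = vs ! length es"
    and saturated: "\<forall>a\<in>set vs. \<forall>v\<in>S. v \<in> inc a \<longrightarrow> v \<in> set es"
  shows "factor_family S (insert (vs, es) F')"
proof -
  let ?S' = "S - set es"
  have w: "walk E V (dual_inc E inc) vs es" and d: "distinct es" and sS: "set es \<subseteq> S"
    using t by (simp_all add: factor_trail_def)
  have ef': "euler_family E ?S' (dual_inc E inc) F'"
    and F'_anchors: "family_anchors F' = {e\<in>E'. inc e \<inter> ?S' \<noteq> {}}"
    and F'_traversals: "\<forall>e\<in>E'. family_traversals F' e = card (inc e \<inter> ?S') div 2"
    using F' by (simp_all add: factor_family_def)
  have finS: "finite S" using finite_subset[OF S finite_vertices] .
  have "es \<noteq> []" using k by auto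
  then have "closed_strict_trail E S (dual_inc E inc) vs es"
    using closed_strict_trailI[OF _ d _ closed] w sS by (simp add: walk_def)
  moreover have "\<forall>T\<in>F'. set vs \<inter> set (fst T) = {}"
    using saturated F'_anchors unfolding family_anchors_def by blast
  ultimately have "euler_family E S (dual_inc E inc) (insert (vs, es) F')"
    using euler_family_insert ef' by blast
  moreover have "family_anchors (insert (vs, es) F') = {e\<in>E'. inc e \<inter> S \<noteq> {}}"
    using factor_trail_anchors[OF t k] F'_anchors sS by (auto simp: family_anchors_def)
  moreover have "(vs, es) \<notin> F'"
    using euler_family_trailD(1,3)[OF ef', of "(vs, es)"] by (cases es) (auto simp: walk_def)
  then have "\<forall>e\<in>E'. family_traversals (insert (vs, es) F') e = card (inc e \<inter> S) div 2"
    using F'_traversals closed_factor_trail_card[OF t closed] card_Int_split[OF finS sS]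
      euler_family_finite[OF ef'] finS by (simp add: family_traversals_def)
  ultimately show ?thesis by (simp add: factor_family_def)
qed

lemma factor_family_exists:
  assumes "S \<subseteq> V" "\<forall>e\<in>E'. even (card (inc e \<inter> S))"
  shows "\<exists>F. factor_family S F"
  using assms
proof (induction "card S" arbitrary: S rule: less_induct)
  case less
  note S = less.prems(1) and even = less.prems(2)
  show ?case
  proof (cases "S = {}")
    case True
    then show ?thesis using factor_family_empty by blast
  next
    case False
    then obtain vs es where t: "factor_trail S vs es" and k: "1 \<le> length es"
      and longest: "\<forall>vs' es'. factor_trail S vs' es' \<longrightarrow> length es' \<le> length es"
      using longest_factor_trail_exists[OF S] by blast
    have closed: "vs ! 0 = vs ! length es"
      using longest_factor_trail_closed[OF S even t longest] .
    have sS: "set es \<subseteq> S" using t by (simp add: factor_trail_def)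
    have "S - set es \<subset> S" using k sS by (cases es) auto
    then have "card (S - set es) < card S"
      using finite_subset[OF S finite_vertices] by (intro psubset_card_mono) auto
    moreover have "\<forall>e\<in>E'. even (card (inc e \<inter> (S - set es)))"
    proof
      fix e assume e: "e \<in> E'"
      have "card (inc e \<inter> S) = card (inc e \<inter> set es) + card (inc e \<inter> (S - set es))"
        using card_Int_split[OF finite_subset[OF S finite_vertices] sS] .
      then show "even (card (inc e \<inter> (S - set es)))"
        using even[rule_format, OF e] closed_factor_trail_card[OF t closed e] by simp
    qed
    ultimately obtain F' where F': "factor_family (S - set es) F'"
      using less.hyps S by blast
    have "\<forall>a\<in>set vs. \<forall>v\<in>S. v \<in> inc a \<longrightarrow> v \<in> set es"
      using longest_closed_factor_trail_saturated[OF S t k longest closed] by blast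
    then show ?thesis using factor_family_insert[OF S F' t k closed] by blast
  qed
qed

end

lemma two_factor_imp_euler_family:
  assumes hg: "hypergraph V E inc" and tf: "two_factor V E inc E'"
    and nonempty: "\<forall>e\<in>E. inc e \<noteq> {}" and even: "\<forall>e\<in>E. even (card (inc e))"
  shows "\<exists>F. euler_family E V (dual_inc E inc) F \<and> family_anchors F = E' \<and>
           (\<forall>e\<in>E'. family_traversals F e = card (inc e) div 2)"
proof -
  interpret hypergraph_two_factor V E inc E' using hg tf by unfold_locales
  have edge_in_V: "inc e \<inter> V = inc e" if "e \<in> E'" for e
    using factor_edge_subset_vertices[OF that] by blast
  have "\<forall>e\<in>E'. even (card (inc e \<inter> V))" using even factor_edges_subset edge_in_V by auto
  then obtain F where F: "factor_family V F" using factor_family_exists[OF subset_refl] by blast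
  have "euler_family E V (dual_inc E inc) F"
    using F by (simp add: factor_family_def)
  moreover have "{e\<in>E'. inc e \<inter> V \<noteq> {}} = E'"
    using edge_in_V nonempty factor_edges_subset by blast
  then have "family_anchors F = E'"
    using F unfolding factor_family_def by simp
  moreover have "\<forall>e\<in>E'. family_traversals F e = card (inc e) div 2"
    using F edge_in_V unfolding factor_family_def by simp
  ultimately show ?thesis by blast
qed

section \<open>Connectivity\<close>

text \<open>Consecutive dual edges of a trail of the dual share an anchor, so its dual edges are the
  anchors of a walk of H whose edges are the inner anchors of the trail.\<close>

lemma dual_trail_walk:
  assumes w: "walk E V (dual_inc E inc) vs es" and d: "distinct es" and ne: "es \<noteq> []"
  shows "walk V (set vs) inc es (butlast (tl vs))"
proof -
  have l: "length vs = Suc (length es)" using walk_length[OF w] .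
  have "es ! m \<noteq> es ! Suc m \<and> es ! m \<in> inc (butlast (tl vs) ! m) \<and> es ! Suc m \<in> inc (butlast (tl vs) ! m)"
    if m: "m < length (butlast (tl vs))" for m
  proof -
    have m': "Suc m < length es" using m l by simp
    have "butlast (tl vs) ! m = vs ! Suc m" using m by (simp add: nth_butlast nth_tl)
    then show ?thesis
      using dual_walk_nthD(2)[OF w, of m] dual_walk_nthD(1)[OF w m'] nth_eq_iff_index_eq[OF d, of m "Suc m"] m' by auto
  qed
  moreover have "set es \<subseteq> V" using w unfolding walk_def by blast
  moreover have "set (butlast (tl vs)) \<subseteq> set vs"
    using set_tl_subset[of vs] by (auto dest: in_set_butlastD)
  ultimately show ?thesis unfolding walk_def using l ne by auto
qed

lemma euler_tour_anchors_connected: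
  assumes t: "euler_tour E V (dual_inc E inc) vs es"
  shows "connected_hg V (set vs) inc"
  unfolding connected_hg_def
proof (intro ballI impI)
  fix u w assume u: "u \<in> V" and w: "w \<in> V"
  have wk: "walk E V (dual_inc E inc) vs es" and d: "distinct es" and se: "set es = V"
    using t unfolding euler_tour_def closed_strict_trail_def closed_walk_def by auto
  have "es \<noteq> []" using u se by auto
  then have W: "walk V (set vs) inc es (butlast (tl vs))"
    using dual_trail_walk[OF wk d] se by simp
  obtain i j where "i < length es" "es ! i = u" "j < length es" "es ! j = w"
    using u w se by (metis in_set_conv_nth)
  then show "\<exists>vs' es'. walk V (set vs) inc vs' es' \<and> hd vs' = u \<and> last vs' = w"
    using walk_connects_anchors[OF W, of i j] walk_length[OF W] by auto
qed

lemma walk_within_one_trail: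
  assumes ef: "euler_family E V (dual_inc E inc) F" and anchors: "family_anchors F = E'"
    and anchor_edges: "\<forall>T\<in>F. \<forall>e\<in>set (fst T). inc e \<subseteq> set (snd T)"
    and wk: "walk V E' inc xs fs"
  shows "\<exists>T\<in>F. set xs \<subseteq> set (snd T)"
proof -
  have l: "length xs = Suc (length fs)" using walk_length[OF wk] .
  have xV: "xs ! m \<in> V" if "m \<le> length fs" for m
    using that l wk unfolding walk_def by (auto intro!: nth_mem)
  obtain T where T: "T \<in> F" "xs ! 0 \<in> set (snd T)"
    using euler_family_trail_exists[OF ef xV[of 0]] by auto
  have "xs ! m \<in> set (snd T)" if "m \<le> length fs" for m
    using that
  proof (induction m)
    case (Suc m)
    then have m: "m < length fs" by simp
    then obtain T' where T': "T' \<in> F" "fs ! m \<in> set (fst T')"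
      using wk anchors unfolding walk_def family_anchors_def by (auto intro: nth_mem)
    then have "xs ! m \<in> set (snd T')" "xs ! Suc m \<in> set (snd T')"
      using walk_nthD(2,3)[OF wk m] anchor_edges by blast+
    moreover have "T' = T"
      using euler_family_trail_unique[OF ef xV[of m] T'(1) T(1)] Suc m calculation by simp
    ultimately show ?case by simp
  qed (use T in simp)
  then have "set xs \<subseteq> set (snd T)" using l by (auto simp: in_set_conv_nth less_Suc_eq_le)
  then show ?thesis using T(1) by blast
qed

lemma connected_euler_family_singleton:
  assumes hg: "hypergraph V E inc"
    and even: "\<forall>e\<in>E. even (card (inc e))" and E': "E' \<subseteq> E" and conn: "connected_hg V E' inc"
    and ef: "euler_family E V (dual_inc E inc) F" and anchors: "family_anchors F = E'"
    and trav: "\<forall>e\<in>E'. family_traversals F e = card (inc e) div 2"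
  shows "\<exists>T. F = {T}"
proof -
  have anchor_edges: "\<forall>T\<in>F. \<forall>e\<in>set (fst T). inc e \<subseteq> set (snd T)"
  proof (intro ballI)
    fix T e assume "T \<in> F" "e \<in> set (fst T)"
    then show "inc e \<subseteq> set (snd T)"
      using dual_euler_family_edges_at[OF hg even E' ef anchors trav, of T e]
        walk_edges_at_subset_set[of "fst T" "snd T" e] by simp
  qed
  have vertex: "\<exists>x\<in>V. x \<in> set (snd T)" if T: "T \<in> F" for T
    using euler_family_trailD(1,3)[OF ef T] by (cases "snd T") (auto simp: walk_def)
  have same: "T1 = T2" if T12: "T1 \<in> F" "T2 \<in> F" for T1 T2
  proof -
    obtain x y where x: "x \<in> V" "x \<in> set (snd T1)" and y: "y \<in> V" "y \<in> set (snd T2)"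
      using vertex T12 by blast
    obtain T where T: "T \<in> F" "x \<in> set (snd T)" "y \<in> set (snd T)"
    proof (cases "x = y")
      case True
      then show ?thesis using that x T12 by blast
    next
      case False
      then obtain xs fs where xs: "walk V E' inc xs fs" "hd xs = x" "last xs = y"
        using conn x y unfolding connected_hg_def by blast
      then have "x \<in> set xs" "y \<in> set xs"
        using walk_length[OF xs(1)] by (metis hd_in_set last_in_set length_0_conv nat.distinct(1))+
      moreover obtain T where "T \<in> F" "set xs \<subseteq> set (snd T)"
        using walk_within_one_trail[OF ef anchors anchor_edges xs(1)] by blast
      ultimately show ?thesis using that by blast
    qed
    show ?thesis
      using euler_family_trail_unique[OF ef x(1) T12(1) T(1) x(2) T(2)]
        euler_family_trail_unique[OF ef y(1) T12(2) T(1) y(2) T(3)] by simp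
  qed
  obtain v where "v \<in> V" using hg unfolding hypergraph_def by blast
  then obtain T where "T \<in> F" using euler_family_trail_exists[OF ef] by blast
  then show ?thesis using same by blast
qed

lemma connected_two_factor_imp_euler_tour:
  assumes hg: "hypergraph V E inc" and nonempty: "\<forall>e\<in>E. inc e \<noteq> {}"
    and even: "\<forall>e\<in>E. even (card (inc e))" and ctf: "connected_two_factor V E inc E'"
  shows "\<exists>vs es. euler_tour E V (dual_inc E inc) vs es \<and> set vs = E' \<and>
           (\<forall>e\<in>E'. traversals vs es e = card (inc e) div 2)"
proof -
  have tf: "two_factor V E inc E'" and conn: "connected_hg V E' inc" and E': "E' \<subseteq> E"
    using ctf unfolding connected_two_factor_def two_factor_def by auto
  obtain F where ef: "euler_family E V (dual_inc E inc) F" and anchors: "family_anchors F = E'"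
    and trav: "\<forall>e\<in>E'. family_traversals F e = card (inc e) div 2"
    using two_factor_imp_euler_family[OF hg tf nonempty even] by blast
  obtain T where F: "F = {T}"
    using connected_euler_family_singleton[OF hg even E' conn ef anchors trav] by blast
  have "closed_strict_trail E V (dual_inc E inc) (fst T) (snd T)"
    using ef F by (simp add: euler_family_def)
  moreover have "set (snd T) = V"
  proof
    show "set (snd T) \<subseteq> V" using euler_family_trailD(1)[OF ef] F by (simp add: walk_def)
    show "V \<subseteq> set (snd T)" using euler_family_trail_exists[OF ef] F by blast
  qed
  ultimately have "euler_tour E V (dual_inc E inc) (fst T) (snd T)" by (simp add: euler_tour_def)
  moreover have "set (fst T) = E'" using anchors F by (simp add: family_anchors_def)
  moreover have "\<forall>e\<in>E'. traversals (fst T) (snd T) e = card (inc e) div 2"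
    using trav F by (simp add: family_traversals_def)
  ultimately show ?thesis by blast
qed

lemma euler_tour_imp_connected_two_factor:
  assumes hg: "hypergraph V E inc" and even: "\<forall>e\<in>E. even (card (inc e))" and E': "E' \<subseteq> E"
    and t: "euler_tour E V (dual_inc E inc) vs es" and anchors: "set vs = E'"
    and trav: "\<forall>e\<in>E'. traversals vs es e = card (inc e) div 2"
  shows "connected_two_factor V E inc E'"
proof -
  have "euler_family E V (dual_inc E inc) {(vs, es)}"
    using t unfolding euler_tour_def euler_family_def by auto
  moreover have "family_anchors {(vs, es)} = E'" using anchors by (simp add: family_anchors_def)
  moreover have "\<forall>e\<in>E'. family_traversals {(vs, es)} e = card (inc e) div 2"
    using trav by (simp add: family_traversals_def)
  ultimately have "two_factor V E inc E'" by (rule euler_family_imp_two_factor[OF hg even E'])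
  then show ?thesis
    using euler_tour_anchors_connected[OF t] anchors by (simp add: connected_two_factor_def)
qed

theorem theorem2p44:
  fixes V :: "'v set" and E :: "'e set" and inc :: "'e \<Rightarrow> 'v set" and E' :: "'e set"
  assumes "hypergraph V E inc"
    and "E \<noteq> {}"
    and "\<forall>e\<in>E. inc e \<noteq> {}"
    and "\<forall>e\<in>E. even (card (inc e))"
    and "E' \<subseteq> E"
  shows "(two_factor V E inc E' \<longleftrightarrow>
            (\<exists>F. euler_family E V (dual_inc E inc) F \<and> family_anchors F = E' \<and>
                 (\<forall>e\<in>E'. family_traversals F e = card (inc e) div 2)))
       \<and> (connected_two_factor V E inc E' \<longleftrightarrow>
            (\<exists>vs es. euler_tour E V (dual_inc E inc) vs es \<and> set vs = E' \<and>
                 (\<forall>e\<in>E'. traversals vs es e = card (inc e) div 2)))"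
  using two_factor_imp_euler_family[OF assms(1) _ assms(3,4)]
    euler_family_imp_two_factor[OF assms(1,4,5)]
    connected_two_factor_imp_euler_tour[OF assms(1,3,4)]
    euler_tour_imp_connected_two_factor[OF assms(1,4,5)]
  by blast

end
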